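(* Let $\Delta$ be a finite set and $P$ a shift-invariant probability measure on $\Delta^{\mathbb Z}$. Fix any version $\omega\mapsto P(X_{\mathbb N}\in\cdot\mid X_{-\mathbb N_0})(\omega)$ of the conditional distribution of the future given the past, and call the elements of its image the causal states. Then the process dimension $\dim(P)$ is at most the number of causal states (allowing the value $\infty$); equivalently, $\log\dim(P)$ is bounded above by the topological statistical complexity, the logarithm of the number of causal states.
   Context: $X_k$ is the $k$-th coordinate projection on $\Delta^{\mathbb Z}$, $X_{\mathbb N}=(X_1,X_2,\dots)$ the future and $X_{-\mathbb N_0}=(\dots,X_{-1},X_0)$ the past. $\sigma$ is the left shift on $\Delta^{\mathbb N}$; for $d_1,\dots,d_n\in\Delta$, $[d_1,\dots,d_n]$ is the cylinder set of sequences starting with $d_1,\dots,d_n$, and for a finite signed measure $\mu$ on $\Delta^{\mathbb N}$, $\tau_{d_1\cdots d_n}(\mu)(B)=\mu([d_1,\dots,d_n]\cap\sigma^{-n}(B))$ (empty word: $\tau(\mu)=\mu$). With $P_{\mathbb N}=P\circ X_{\mathbb N}^{-1}$, the canonical OOM vector space is $V_P=\operatorname{span}\{\tau_w(P_{\mathbb N}): w \text{ finite word over }\Delta\}$ and the process dimension is $\dim(P)=\dim(V_P)$. *)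

theory Defs
  imports "HOL-Probability.Probability" "HOL-Library.Function_Algebras"
begin

text \<open>Delta^Z as int => 'd with the product of discrete sigma-algebras; Delta^N
  (indices 1,2,... of the paper) as nat => 'd, where index 0 corresponds to X_1.\<close>

definition MZ :: "(int \<Rightarrow> 'd) measure" where
  "MZ = PiM UNIV (\<lambda>_. count_space UNIV)"

definition MN :: "(nat \<Rightarrow> 'd) measure" where
  "MN = PiM UNIV (\<lambda>_. count_space UNIV)"

definition future :: "(int \<Rightarrow> 'd) \<Rightarrow> (nat \<Rightarrow> 'd)" where
  "future \<omega> = (\<lambda>n. \<omega> (int n + 1))"

definition past :: "(int \<Rightarrow> 'd) \<Rightarrow> (nat \<Rightarrow> 'd)" where
  "past \<omega> = (\<lambda>n. \<omega> (- int n))"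

definition shiftZ :: "(int \<Rightarrow> 'd) \<Rightarrow> (int \<Rightarrow> 'd)" where
  "shiftZ \<omega> = (\<lambda>i. \<omega> (i + 1))"

definition shift_invariant :: "(int \<Rightarrow> 'd) measure \<Rightarrow> bool" where
  "shift_invariant P \<longleftrightarrow> distr P MZ shiftZ = P"

definition cyl :: "'d list \<Rightarrow> (nat \<Rightarrow> 'd) set" where
  "cyl w = {x. \<forall>i<length w. x i = w ! i}"

definition shift_pre :: "nat \<Rightarrow> (nat \<Rightarrow> 'd) set \<Rightarrow> (nat \<Rightarrow> 'd) set" where
  "shift_pre n B = {x. (\<lambda>i. x (i + n)) \<in> B}"

text \<open>Finite signed measures on Delta^N are represented as real-valued set functions
  (zero outside the measurable sets); tau_w(mu)(B) = mu([w] \<inter> sigma^{-n} B).\<close>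
definition tau :: "'d list \<Rightarrow> (nat \<Rightarrow> 'd) measure \<Rightarrow> ((nat \<Rightarrow> 'd) set \<Rightarrow> real)" where
  "tau w \<mu> = (\<lambda>B. if B \<in> sets MN then measure \<mu> (cyl w \<inter> shift_pre (length w) B) else 0)"

definition PN :: "(int \<Rightarrow> 'd) measure \<Rightarrow> (nat \<Rightarrow> 'd) measure" where
  "PN P = distr P MN future"

definition fscale :: "real \<Rightarrow> ('a \<Rightarrow> real) \<Rightarrow> ('a \<Rightarrow> real)" where
  "fscale c f = (\<lambda>x. c * f x)"

definition VP :: "(int \<Rightarrow> 'd) measure \<Rightarrow> ((nat \<Rightarrow> 'd) set \<Rightarrow> real) set" where
  "VP P = module.span fscale (range (\<lambda>w. tau w (PN P)))"

definition proc_dim :: "(int \<Rightarrow> 'd) measure \<Rightarrow> enat" where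
  "proc_dim P = (if \<exists>B. finite B \<and> module.span fscale B = VP P
                 then enat (vector_space.dim fscale (VP P)) else \<infinity>)"

definition cond_dist_version ::
  "(int \<Rightarrow> 'd) measure \<Rightarrow> ((int \<Rightarrow> 'd) \<Rightarrow> (nat \<Rightarrow> 'd) measure) \<Rightarrow> bool" where
  "cond_dist_version P \<kappa> \<longleftrightarrow>
     (\<forall>\<omega>\<in>space P. prob_space (\<kappa> \<omega>) \<and> sets (\<kappa> \<omega>) = sets MN) \<and>
     (\<forall>B\<in>sets MN.
        (\<lambda>\<omega>. measure (\<kappa> \<omega>) B) \<in> borel_measurable (vimage_algebra (space P) past MN) \<and>
        (\<forall>A\<in>sets MN.
           measure P {\<omega>\<in>space P. past \<omega> \<in> A \<and> future \<omega> \<in> B}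
             = (\<integral>\<omega>. indicator {\<omega>\<in>space P. past \<omega> \<in> A} \<omega> * measure (\<kappa> \<omega>) B \<partial>P)))"

definition card_enat :: "'a set \<Rightarrow> enat" where
  "card_enat S = (if finite S then enat (card S) else \<infinity>)"

end

theory Submission
  imports Defs
begin

text \<open>Since \<kappa> takes finitely many values, each level set {\<kappa> = k} is measurable: it is cut
  out by finitely many sets B separating k from the other values. For a word w of length n,
  shift invariance turns tau_w(P_N)(B) into P(X_{-n+1} ... X_0 = w, X_N \<in> B), and the kernel
  property writes this as the finite sum over causal states k of P(X_{-n+1} ... X_0 = w, \<kappa> = k) * k(B).
  Hence V_P lies in the span of the causal states.\<close>

lemma all_less_reflect: "(\<forall>i<n. P i) \<longleftrightarrow> (\<forall>j<n. P (n - Suc j))"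
proof safe
  fix i
  assume reflected: "\<forall>j<n. P (n - Suc j)" and "i < n"
  then have "n - Suc i < n"
    by simp
  with reflected have "P (n - Suc (n - Suc i))"
    by blast
  with \<open>i < n\<close> show "P i"
    by (simp add: Suc_diff_Suc)
qed simp

lemma sum_fun_apply: "(\<Sum>k\<in>K. f k) x = (\<Sum>k\<in>K. f k x)"
  by (induction K rule: infinite_finite_induct) auto

lemma measurable_from_vimage_algebra:
  assumes "g \<in> measurable M N" and "f \<in> measurable (vimage_algebra (space M) g N) L"
  shows "f \<in> measurable M L"
proof -
  have "sets (vimage_algebra (space M) g N) \<subseteq> sets M"
    using assms(1) by (subst sets_vimage_algebra2) (auto simp: measurable_def)
  then show ?thesis
    using assms(2) unfolding measurable_def by auto
qed

lemma finite_measure_eqI_measure: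
  assumes "finite_measure M" and "finite_measure N" and "sets M = sets N"
    and "\<And>A. A \<in> sets M \<Longrightarrow> measure M A = measure N A"
  shows "M = N"
  using assms by (intro measure_eqI) (auto simp: finite_measure.emeasure_eq_measure)

lemma sets_level_set_finite_valued:
  fixes \<kappa> :: "'a \<Rightarrow> 'b measure"
  assumes finite: "finite (\<kappa> ` space M)"
    and kernel: "\<And>\<omega>. \<omega> \<in> space M \<Longrightarrow> finite_measure (\<kappa> \<omega>) \<and> sets (\<kappa> \<omega>) = sets N"
    and measurable: "\<And>B. B \<in> sets N \<Longrightarrow> (\<lambda>\<omega>. measure (\<kappa> \<omega>) B) \<in> borel_measurable M"
  shows "{\<omega>\<in>space M. \<kappa> \<omega> = k} \<in> sets M"
proof (cases "k \<in> \<kappa> ` space M")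
  case False
  then have "{\<omega>\<in>space M. \<kappa> \<omega> = k} = {}"
    by auto
  then show ?thesis
    by (metis sets.empty_sets)
next
  case True
  have "\<exists>B\<in>sets N. measure k' B \<noteq> measure k B" if "k' \<in> \<kappa> ` space M - {k}" for k'
    using that True kernel finite_measure_eqI_measure[of k' k] by fastforce
  then obtain sep where sep: "\<And>k'. k' \<in> \<kappa> ` space M - {k} \<Longrightarrow>
      sep k' \<in> sets N \<and> measure k' (sep k') \<noteq> measure k (sep k')"
    by metis
  have "{\<omega>\<in>space M. \<kappa> \<omega> = k}
      = {\<omega>\<in>space M. \<forall>k'\<in>\<kappa> ` space M - {k}. measure (\<kappa> \<omega>) (sep k') = measure k (sep k')}"
    using sep by blast
  also have "\<dots> \<in> sets M"
  proof (rule sets.sets_Collect_finite_All)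
    fix k'
    assume "k' \<in> \<kappa> ` space M - {k}"
    then have "(\<lambda>\<omega>. measure (\<kappa> \<omega>) (sep k')) -` {measure k (sep k')} \<inter> space M \<in> sets M"
      using sep measurable by (intro measurable_sets[of _ M borel]) auto
    then show "{\<omega>\<in>space M. measure (\<kappa> \<omega>) (sep k') = measure k (sep k')} \<in> sets M"
      by (simp add: vimage_def Int_def conj_commute)
  qed (use finite in simp)
  finally show ?thesis .
qed

lemma integral_indicator_finite_valued:
  fixes \<kappa> :: "'a \<Rightarrow> 'b" and f :: "'b \<Rightarrow> real"
  assumes "finite_measure M" and finite: "finite (\<kappa> ` space M)" and S: "S \<in> sets M"
    and level: "\<And>k. {\<omega>\<in>space M. \<kappa> \<omega> = k} \<in> sets M"
  shows "(\<integral>\<omega>. indicator S \<omega> * f (\<kappa> \<omega>) \<partial>M)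
    = (\<Sum>k\<in>\<kappa> ` space M. measure M (S \<inter> {\<omega>\<in>space M. \<kappa> \<omega> = k}) * f k)"
proof -
  interpret finite_measure M by fact
  let ?level = "\<lambda>k. S \<inter> {\<omega>\<in>space M. \<kappa> \<omega> = k}"
  have "(\<integral>\<omega>. indicator S \<omega> * f (\<kappa> \<omega>) \<partial>M)
      = (\<integral>\<omega>. (\<Sum>k\<in>\<kappa> ` space M. indicator (?level k) \<omega> * f k) \<partial>M)"
  proof (rule Bochner_Integration.integral_cong[OF refl])
    fix \<omega>
    assume "\<omega> \<in> space M"
    then have "(\<Sum>k\<in>\<kappa> ` space M. indicator (?level k) \<omega> * f k)
        = (\<Sum>k\<in>\<kappa> ` space M. if k = \<kappa> \<omega> then indicator S \<omega> * f k else 0)"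
      by (intro sum.cong) (auto simp: indicator_def)
    also have "\<dots> = indicator S \<omega> * f (\<kappa> \<omega>)"
      using finite \<open>\<omega> \<in> space M\<close> by (simp add: sum.delta')
    finally show "indicator S \<omega> * f (\<kappa> \<omega>) = (\<Sum>k\<in>\<kappa> ` space M. indicator (?level k) \<omega> * f k)"
      by simp
  qed
  also have "\<dots> = (\<Sum>k\<in>\<kappa> ` space M. measure M (?level k) * f k)"
    using S level by (simp add: emeasure_eq_measure)
  finally show ?thesis .
qed

lemma space_MZ [simp]: "space MZ = UNIV"
  by (simp add: MZ_def space_PiM)

lemma space_MN [simp]: "space MN = UNIV"
  by (simp add: MN_def space_PiM)

lemma measurable_component_MZ: "(\<lambda>\<omega>. \<omega> i) \<in> measurable MZ (count_space UNIV)"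
  unfolding MZ_def by (rule measurable_component_singleton) simp

lemma measurable_component_MN: "(\<lambda>x. x i) \<in> measurable MN (count_space UNIV)"
  unfolding MN_def by (rule measurable_component_singleton) simp

lemma measurable_PiM_count_space_componentwise:
  assumes "\<And>i. (\<lambda>\<omega>. f \<omega> i) \<in> measurable M (count_space UNIV)"
  shows "f \<in> measurable M (PiM UNIV (\<lambda>_. count_space UNIV))"
proof -
  have "(\<lambda>\<omega> i. f \<omega> i) \<in> measurable M (PiM UNIV (\<lambda>_. count_space UNIV))"
    using assms by (intro measurable_PiM_single'[where f="\<lambda>i \<omega>. f \<omega> i"]) auto
  then show ?thesis
    by simp
qed

lemma measurable_past: "past \<in> measurable MZ MN"
  unfolding past_def MN_def
  by (rule measurable_PiM_count_space_componentwise) (rule measurable_component_MZ)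

lemma measurable_future: "future \<in> measurable MZ MN"
  unfolding future_def MN_def
  by (rule measurable_PiM_count_space_componentwise) (rule measurable_component_MZ)

lemma measurable_shiftZ_pow: "(\<lambda>\<omega> i. \<omega> (i + int n)) \<in> measurable MZ MZ"
  unfolding MZ_def
  by (rule measurable_PiM_count_space_componentwise) (rule measurable_component_MZ[unfolded MZ_def])

lemma measurable_shiftN_pow: "(\<lambda>x i. x (i + n)) \<in> measurable MN MN"
  unfolding MN_def
  by (rule measurable_PiM_count_space_componentwise) (rule measurable_component_MN[unfolded MN_def])

lemma sets_cyl: "cyl w \<in> sets MN"
proof -
  have component_eq: "{x. x i = c} \<in> sets MN" for i c
    using measurable_sets[OF measurable_component_MN, of "{c}" i] by (simp add: vimage_def)
  have "{x\<in>space MN. \<forall>i\<in>{..<length w}. x i = w ! i} \<in> sets MN"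
    by (rule sets.sets_Collect_finite_All) (simp_all add: component_eq)
  moreover have "{x\<in>space MN. \<forall>i\<in>{..<length w}. x i = w ! i} = cyl w"
    by (auto simp: cyl_def)
  ultimately show ?thesis
    by simp
qed

lemma sets_shift_pre: "B \<in> sets MN \<Longrightarrow> shift_pre n B \<in> sets MN"
  using measurable_sets[OF measurable_shiftN_pow, of B n] by (simp add: shift_pre_def vimage_def)

lemma shift_invariant_iterate:
  assumes "sets P = sets MZ" and "shift_invariant P"
  shows "distr P MZ (\<lambda>\<omega> i. \<omega> (i + int n)) = P"
proof (induction n)
  case 0
  show ?case
    using distr_id2[of MZ P] assms(1) by simp
next
  case (Suc n)
  have shift: "shiftZ \<in> measurable MZ MZ"
    using measurable_shiftZ_pow[of 1] unfolding shiftZ_def by simp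
  have "distr (distr P MZ shiftZ) MZ (\<lambda>\<omega> i. \<omega> (i + int n))
      = distr P MZ ((\<lambda>\<omega> i. \<omega> (i + int n)) \<circ> shiftZ)"
    using shift measurable_cong_sets[OF assms(1) refl]
    by (intro distr_distr measurable_shiftZ_pow) auto
  also have "(\<lambda>\<omega> i. \<omega> (i + int n)) \<circ> shiftZ = (\<lambda>\<omega> i. \<omega> (i + int (Suc n)))"
    by (auto simp: shiftZ_def algebra_simps)
  finally have "distr P MZ (\<lambda>\<omega> i. \<omega> (i + int (Suc n)))
      = distr (distr P MZ shiftZ) MZ (\<lambda>\<omega> i. \<omega> (i + int n))" ..
  then show ?case
    using assms(2) Suc.IH by (simp add: shift_invariant_def)
qed

lemma vimage_future_cyl_shift_pre:
  "future -` (cyl w \<inter> shift_pre (length w) B)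
    = (\<lambda>\<omega> i. \<omega> (i + int (length w))) -` {\<omega>. past \<omega> \<in> cyl (rev w) \<and> future \<omega> \<in> B}"
proof -
  have "(\<forall>i<length w. \<omega> (int i + 1) = w ! i) \<longleftrightarrow>
      (\<forall>j<length w. \<omega> (int (length w) - int j) = w ! (length w - Suc j))" for \<omega> :: "int \<Rightarrow> _"
    by (subst all_less_reflect) (auto simp: of_nat_diff)
  then show ?thesis
    by (auto simp: past_def future_def cyl_def shift_pre_def rev_nth algebra_simps)
qed

lemma tau_PN_eq_past_future:
  fixes P :: "(int \<Rightarrow> 'd) measure"
  assumes sets_P: "sets P = sets MZ" and "shift_invariant P" and B: "B \<in> sets MN"
  shows "tau w (PN P) B = measure P {\<omega>. past \<omega> \<in> cyl (rev w) \<and> future \<omega> \<in> B}"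
proof -
  define n where "n = length w"
  define shift :: "(int \<Rightarrow> 'd) \<Rightarrow> int \<Rightarrow> 'd" where "shift = (\<lambda>\<omega> i. \<omega> (i + int n))"
  define S where "S = {\<omega>. past \<omega> \<in> cyl (rev w) \<and> future \<omega> \<in> B}"
  have space_P: "space P = UNIV"
    using sets_eq_imp_space_eq[OF sets_P] by simp
  have future: "future \<in> measurable P MN"
    using measurable_future measurable_cong_sets[OF sets_P refl] by blast
  have S: "S \<in> sets MZ"
  proof -
    have "past -` cyl (rev w) \<inter> future -` B \<in> sets MZ"
      using measurable_sets[OF measurable_past sets_cyl] measurable_sets[OF measurable_future B]
      by auto
    then show ?thesis
      by (simp add: S_def vimage_def Collect_conj_eq)
  qed
  have cyl_shift_pre: "cyl w \<inter> shift_pre n B \<in> sets MN"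
    using sets_cyl sets_shift_pre[OF B] by blast
  have vimage_future: "future -` (cyl w \<inter> shift_pre n B) = shift -` S"
    unfolding shift_def S_def n_def by (rule vimage_future_cyl_shift_pre)
  have "tau w (PN P) B = measure P (future -` (cyl w \<inter> shift_pre n B))"
    using B measure_distr[OF future cyl_shift_pre] by (simp add: tau_def PN_def n_def space_P)
  also have "\<dots> = measure P (shift -` S)"
    by (simp only: vimage_future)
  also have "\<dots> = measure (distr P MZ shift) S"
  proof -
    have "shift \<in> measurable P MZ"
      unfolding shift_def measurable_cong_sets[OF sets_P refl] by (rule measurable_shiftZ_pow)
    then show ?thesis
      using measure_distr[of shift P MZ S] S by (simp add: space_P)
  qed
  also have "\<dots> = measure P S"
    using shift_invariant_iterate[OF sets_P assms(2)] by (simp add: shift_def)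
  finally show ?thesis
    by (simp add: S_def)
qed

lemma vector_space_fscale: "vector_space fscale"
  by unfold_locales (auto simp: fscale_def fun_eq_iff algebra_simps)

lemma proc_dim_le_card_of_span:
  assumes "finite G" and "VP P \<subseteq> module.span fscale G"
  shows "proc_dim P \<le> enat (card G)"
proof -
  interpret vector_space fscale
    by (rule vector_space_fscale)
  obtain B where B: "B \<subseteq> VP P" "independent B" "VP P \<subseteq> span B" "card B = dim (VP P)"
    by (rule basis_exists)
  have "finite B \<and> card B \<le> card G"
    using assms B by (intro independent_span_bound) auto
  moreover have "span B = VP P"
    using span_mono[OF B(1)] B(3) span_span unfolding VP_def by blast
  ultimately show ?thesis
    using B(4) unfolding proc_dim_def by auto
qed

text \<open>A causal state as a vector of the space containing V_P: like tau, it is set to 0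
  outside the measurable sets.\<close>

definition setfun_MN :: "(nat \<Rightarrow> 'd) measure \<Rightarrow> (nat \<Rightarrow> 'd) set \<Rightarrow> real" where
  "setfun_MN k = (\<lambda>B. if B \<in> sets MN then measure k B else 0)"

lemma tau_PN_in_span_causal_states:
  fixes P :: "(int \<Rightarrow> 'd) measure"
  assumes "prob_space P" and sets_P: "sets P = sets MZ" and "shift_invariant P"
    and cond: "cond_dist_version P \<kappa>" and finite: "finite (\<kappa> ` space P)"
  shows "tau w (PN P) \<in> module.span fscale (setfun_MN ` \<kappa> ` space P)"
proof -
  interpret P: prob_space P
    by fact
  interpret vector_space fscale
    by (rule vector_space_fscale)
  let ?K = "\<kappa> ` space P"
  let ?level = "\<lambda>k. {\<omega>\<in>space P. \<kappa> \<omega> = k}"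
  have space_P: "space P = UNIV"
    using sets_eq_imp_space_eq[OF sets_P] by simp
  have past: "past \<in> measurable P MN"
    using measurable_past measurable_cong_sets[OF sets_P refl] by blast
  have level: "?level k \<in> sets P" for k
  proof (rule sets_level_set_finite_valued[OF finite])
    show "finite_measure (\<kappa> \<omega>) \<and> sets (\<kappa> \<omega>) = sets MN" if "\<omega> \<in> space P" for \<omega>
      using cond that unfolding cond_dist_version_def by (auto intro: prob_space.finite_measure)
    show "(\<lambda>\<omega>. measure (\<kappa> \<omega>) B) \<in> borel_measurable P" if "B \<in> sets MN" for B
      using cond that measurable_from_vimage_algebra[OF past] unfolding cond_dist_version_def
      by blast
  qed
  define S where "S = {\<omega>. past \<omega> \<in> cyl (rev w)}"
  have S: "S \<in> sets P"
    using measurable_sets[OF past sets_cyl] by (simp add: S_def vimage_def space_P)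
  have "tau w (PN P) B = (\<Sum>k\<in>?K. measure P (S \<inter> ?level k) * setfun_MN k B)" for B
  proof (cases "B \<in> sets MN")
    case True
    have "tau w (PN P) B = measure P {\<omega>. past \<omega> \<in> cyl (rev w) \<and> future \<omega> \<in> B}"
      by (rule tau_PN_eq_past_future[OF sets_P assms(3) True])
    also have "\<dots> = (\<integral>\<omega>. indicator S \<omega> * measure (\<kappa> \<omega>) B \<partial>P)"
      using cond sets_cyl[of "rev w"] True unfolding cond_dist_version_def S_def space_P by simp
    also have "\<dots> = (\<Sum>k\<in>?K. measure P (S \<inter> ?level k) * measure k B)"
      using finite S level by (rule integral_indicator_finite_valued[OF P.finite_measure_axioms])
    finally show ?thesis
      using True by (simp add: setfun_MN_def)
  qed (simp add: tau_def setfun_MN_def)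
  then have "tau w (PN P) = (\<Sum>k\<in>?K. fscale (measure P (S \<inter> ?level k)) (setfun_MN k))"
    by (simp add: fun_eq_iff sum_fun_apply fscale_def)
  also have "\<dots> \<in> span (setfun_MN ` ?K)"
    by (intro span_sum span_scale span_base) auto
  finally show ?thesis .
qed

theorem mainTheorem2:
  fixes P :: "(int \<Rightarrow> 'd::finite) measure"
    and \<kappa> :: "(int \<Rightarrow> 'd) \<Rightarrow> (nat \<Rightarrow> 'd) measure"
  assumes "prob_space P"
    and "sets P = sets MZ"
    and "shift_invariant P"
    and "cond_dist_version P \<kappa>"
  shows "proc_dim P \<le> card_enat (\<kappa> ` space P)"
proof (cases "finite (\<kappa> ` space P)")
  case True
  interpret vector_space fscale
    by (rule vector_space_fscale)
  have "VP P \<subseteq> span (setfun_MN ` \<kappa> ` space P)"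
    unfolding VP_def using tau_PN_in_span_causal_states[OF assms True]
    by (intro span_minimal) auto
  then have "proc_dim P \<le> enat (card (setfun_MN ` \<kappa> ` space P))"
    using True by (intro proc_dim_le_card_of_span) auto
  also have "\<dots> \<le> enat (card (\<kappa> ` space P))"
    using True by (simp add: card_image_le)
  finally show ?thesis
    using True by (simp add: card_enat_def)
qed (simp add: card_enat_def)

end
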